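(* Assume $\rho>\lambda_0(1-\gamma)$. Then the series $\frac{b_0}{\alpha_0}+\sum_{k=1}^\infty\frac{\beta_k}{\lambda_k-g}b_k$ converges in $C(\mathbf S^1)$ (sup-norm), and its sum belongs to $C^2(\mathbf S^1)$.
   Context: $\mathbf S^1\cong[0,2\pi]$ with endpoints identified, Lebesgue measure $d\theta$. $Lx=\sigma x''+Ax$ on $C^2(\mathbf S^1)$ with $\sigma>0$, $A\in C(\mathbf S^1;(0,\infty))$. $\{b_k\}_{k\ge0}$ is an orthonormal basis of $L^2(\mathbf S^1)$ of eigenfunctions of $L$, $Lb_k=\lambda_kb_k$, where $\lambda_0$ is the largest eigenvalue (simple), $b_0>0$, $\lambda_k<\lambda_0$ for $k\ge1$, $\lambda_k\to-\infty$. $\eta\in C(\mathbf S^1;(0,\infty))$, $q\ge0$, $\gamma\in(0,1)\cup(1,\infty)$, $\rho>0$. $\alpha_0=\Big[\frac{\gamma}{\rho-\lambda_0(1-\gamma)}\int_{\mathbf S^1}\eta^{\frac{q+\gamma-1}{\gamma}}b_0^{\frac{\gamma-1}{\gamma}}d\theta\Big]^{\frac{\gamma}{1-\gamma}}$, $\beta=\alpha_0b_0$, $\beta_k=\int_{\mathbf S^1}b_k\,\beta^{-1/\gamma}\eta^{\frac{q+\gamma-1}{\gamma}}d\theta$ for $k\ge1$, $g=\frac{\lambda_0-\rho}{\gamma}$. *)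

theory Defs
  imports "HOL-Analysis.Analysis"
begin

text \<open>The circle S^1 = [0,2pi] with endpoints identified; functions on S^1 are
  represented as 2pi-periodic functions on the real line.\<close>

definition periodic2pi :: "(real \<Rightarrow> real) \<Rightarrow> bool" where
  "periodic2pi f \<longleftrightarrow> (\<forall>x. f (x + 2 * pi) = f x)"

definition C0_circle :: "(real \<Rightarrow> real) \<Rightarrow> bool" where
  "C0_circle f \<longleftrightarrow> periodic2pi f \<and> continuous_on UNIV f"

definition C2_circle :: "(real \<Rightarrow> real) \<Rightarrow> bool" where
  "C2_circle f \<longleftrightarrow> periodic2pi f \<and>
     (\<exists>f' f''. (\<forall>x. (f has_real_derivative f' x) (at x)) \<and>
               (\<forall>x. (f' has_real_derivative f'' x) (at x)) \<and>
               continuous_on UNIV f'')"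

definition circ_int :: "(real \<Rightarrow> real) \<Rightarrow> real" where
  "circ_int f = set_lebesgue_integral lborel {0..2*pi} f"

definition L2_circle :: "(real \<Rightarrow> real) \<Rightarrow> bool" where
  "L2_circle f \<longleftrightarrow> f \<in> borel_measurable lborel \<and>
     set_integrable lborel {0..2*pi} (\<lambda>x. (f x)\<^sup>2)"

definition Lop :: "real \<Rightarrow> (real \<Rightarrow> real) \<Rightarrow> (real \<Rightarrow> real) \<Rightarrow> real \<Rightarrow> real" where
  "Lop \<sigma> A f x = \<sigma> * deriv (deriv f) x + A x * f x"

definition ONB_L2_circle :: "(nat \<Rightarrow> real \<Rightarrow> real) \<Rightarrow> bool" where
  "ONB_L2_circle b \<longleftrightarrow>
     (\<forall>k. L2_circle (b k)) \<and>
     (\<forall>j k. circ_int (\<lambda>x. b j x * b k x) = (if j = k then 1 else 0)) \<and>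
     (\<forall>f. L2_circle f \<longrightarrow>
        ((\<lambda>n. circ_int (\<lambda>x. (f x - (\<Sum>k<n. circ_int (\<lambda>y. f y * b k y) * b k x))\<^sup>2))
           \<longlonglongrightarrow> 0))"

end

theory Submission
  imports Defs "HOL-Library.Periodic_Fun"
begin

text \<open>
  Put \<open>h = \<beta> powr (-1/\<gamma>) * \<eta> powr ((q + \<gamma> - 1)/\<gamma>)\<close>. This is a continuous periodic
  function whose coefficients in the eigenbasis are the \<open>\<beta>\<^sub>k\<close>, so they are square summable
  (Bessel), and since \<open>\<lambda>\<^sub>k \<rightarrow> -\<infinity>\<close> the coefficients \<open>c\<^sub>k = \<beta>\<^sub>k / (\<lambda>\<^sub>k - g)\<close>
  satisfy \<open>\<Sum> c\<^sub>k\<^sup>2 (1 + \<lambda>\<^sub>k\<^sup>2) < \<infinity>\<close>.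

  For a finite sum \<open>w = \<Sum> c\<^sub>k b\<^sub>k\<close> the eigenvalue equation gives
  \<open>\<sigma> w'' = \<Sum> c\<^sub>k \<lambda>\<^sub>k b\<^sub>k - A w\<close>, whose \<open>L\<^sup>1\<close> norm is bounded by orthonormality in terms of
  \<open>\<Sum> c\<^sub>k\<^sup>2 (1 + \<lambda>\<^sub>k\<^sup>2)\<close>. On the circle \<open>w'\<close> has a zero and \<open>w\<^sup>2\<close> attains its mean, so
  \<open>sup |w'| \<le> \<parallel>w''\<parallel>\<^sub>1\<close> and \<open>sup |w| \<le> \<parallel>w\<parallel>\<^sub>2 / sqrt (2\<pi>) + 2\<pi> sup |w'|\<close>. Hence the series
  and its termwise derivative converge uniformly, and the sum \<open>v\<close> is \<open>C\<^sup>1\<close>.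

  For large \<open>k\<close> the relation \<open>(\<lambda>\<^sub>k - g) c\<^sub>k = \<beta>\<^sub>k\<close> turns \<open>\<sigma>\<close> times the second derivative
  of a partial sum into the Fourier partial sum of \<open>h\<close> plus \<open>(g - A)\<close> times the partial sum,
  up to a fixed finite correction. By completeness of the basis these converge in \<open>L\<^sup>1\<close>,
  and \<open>L\<^sup>1\<close> convergence of the derivatives of a convergent sequence identifies \<open>v''\<close>
  with a continuous function.
\<close>

section \<open>Periodic functions and integral estimates\<close>

lemma periodic2pi_in_period:
  assumes "periodic2pi f"
  obtains y where "y \<in> {0..2*pi}" "f x = f y"
proof -
  interpret periodic_fun_simple f "2*pi"
    using assms by unfold_locales (simp add: periodic2pi_def)
  define n where "n = \<lfloor>x / (2*pi)\<rfloor>"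
  have "of_int n * (2*pi) \<le> x" "x < (of_int n + 1) * (2*pi)"
    unfolding n_def using floor_divide_lower[of "2*pi" x] floor_divide_upper[of "2*pi" x] by simp_all
  then have "x - of_int n * (2*pi) \<in> {0..2*pi}" by (auto simp: algebra_simps)
  moreover have "f x = f (x - of_int n * (2*pi))" by (rule minus_of_int[symmetric])
  ultimately show thesis by (rule that)
qed

lemma periodic2pi_bounded:
  assumes "continuous_on UNIV f" "periodic2pi f"
  obtains M where "\<And>x. \<bar>f x\<bar> \<le> M"
proof -
  have "bounded (f ` {0..2*pi})"
    using assms(1) by (intro compact_imp_bounded compact_continuous_image)
      (auto intro: continuous_on_subset)
  then obtain M where M: "\<forall>y\<in>{0..2*pi}. \<bar>f y\<bar> \<le> M"
    by (auto simp: bounded_real)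
  show thesis
  proof
    fix x
    obtain y where "y \<in> {0..2*pi}" "f x = f y" using periodic2pi_in_period[OF assms(2)] .
    then show "\<bar>f x\<bar> \<le> M" using M by simp
  qed
qed

lemma periodic2pi_deriv:
  assumes "periodic2pi f" and f': "\<And>x. (f has_real_derivative f' x) (at x)"
  shows "periodic2pi f'"
  unfolding periodic2pi_def
proof
  fix x
  have "((\<lambda>t. f (t + 2*pi)) has_real_derivative f' (x + 2*pi)) (at x)"
    using f'[of "x + 2*pi"] by (subst (asm) DERIV_shift) simp
  moreover have "(\<lambda>t. f (t + 2*pi)) = f" using assms(1) by (auto simp: periodic2pi_def)
  ultimately show "f' (x + 2*pi) = f' x" using f'[of x] by (auto intro: DERIV_unique)
qed

lemma periodic2pi_tendsto:
  assumes "\<And>n. periodic2pi (f n)" "\<And>x. (\<lambda>n. f n x) \<longlonglongrightarrow> g x"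
  shows "periodic2pi g"
  unfolding periodic2pi_def
proof
  fix x
  show "g (x + 2*pi) = g x"
    using assms(2)[of "x + 2*pi"] assms(2)[of x] assms(1)
    by (auto simp: periodic2pi_def intro: LIMSEQ_unique)
qed

lemma has_real_derivative_integral_at:
  fixes f :: "real \<Rightarrow> real"
  assumes "continuous_on UNIV f" "a < x"
  shows "((\<lambda>y. integral {a..y} f) has_real_derivative f x) (at x)"
proof -
  have "((\<lambda>y. integral {a..y} f) has_real_derivative f x) (at x within {a..x+1})"
    by (rule integral_has_real_derivative) (use assms in \<open>auto intro: continuous_on_subset\<close>)
  then show ?thesis using assms by (simp add: at_within_Icc_at)
qed

lemma integral_period_shift:
  fixes f :: "real \<Rightarrow> real"
  assumes f: "continuous_on UNIV f" "periodic2pi f"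
  shows "integral {a..a+2*pi} f = integral {0..2*pi} f"
proof -
  define c where "c = min a 0 - 1"
  define G where "G t = integral {c..t+2*pi} f - integral {c..t} f" for t
  have "(G has_real_derivative 0) (at t)" if "c < t" for t
  proof -
    have "((\<lambda>y. integral {c..y + 2*pi} f) has_real_derivative f (t + 2*pi)) (at t)"
      using has_real_derivative_integral_at[OF f(1), of c "t + 2*pi"] that pi_gt_zero
      by (subst DERIV_shift[symmetric]) simp
    from DERIV_diff[OF this has_real_derivative_integral_at[OF f(1) that]]
    show ?thesis unfolding G_def using f(2) by (simp add: periodic2pi_def)
  qed
  then have "G a = G 0"
    by (intro DERIV_isconst3[of c "max a 0 + 1"]) (auto simp: c_def)
  moreover have "G t = integral {t..t+2*pi} f" if "c \<le> t" for t
    using Henstock_Kurzweil_Integration.integral_combine[OF that, of "t + 2*pi" f] f(1) pi_gt_zero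
    by (simp add: G_def integrable_continuous_interval continuous_on_subset)
  ultimately show ?thesis by (simp add: c_def)
qed

lemma integral_abs_le_sqrt_integral_square:
  fixes f :: "real \<Rightarrow> real"
  assumes f: "continuous_on {a..b} f" and "a < b"
  shows "integral {a..b} (\<lambda>x. \<bar>f x\<bar>) \<le> sqrt ((b - a) * integral {a..b} (\<lambda>x. (f x)\<^sup>2))"
proof -
  define J where "J = integral {a..b} (\<lambda>x. \<bar>f x\<bar>)"
  define Q where "Q = integral {a..b} (\<lambda>x. (f x)\<^sup>2)"
  define s where "s = J / (b - a)"
  have "0 \<le> integral {a..b} (\<lambda>x. (\<bar>f x\<bar> - s)\<^sup>2)"
    by (rule integral_nonneg) (auto intro!: integrable_continuous_interval continuous_intros f)
  also have "\<dots> = integral {a..b} (\<lambda>x. ((f x)\<^sup>2 - 2 * s * \<bar>f x\<bar>) + s\<^sup>2)"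
    by (simp add: power2_eq_square algebra_simps)
  also have "\<dots> = Q - 2 * s * J + (b - a) * s\<^sup>2"
    unfolding Q_def J_def using \<open>a < b\<close>
    by (subst integral_add integral_diff, auto intro!: integrable_continuous_interval continuous_intros f)+
  also have "\<dots> = Q - J\<^sup>2 / (b - a)"
    using \<open>a < b\<close> unfolding s_def by (simp add: divide_simps power2_eq_square)
  finally have "J\<^sup>2 \<le> (b - a) * Q"
    using \<open>a < b\<close> by (simp add: pos_divide_le_eq mult.commute)
  moreover have "0 \<le> J"
    unfolding J_def by (rule integral_nonneg) (auto intro!: integrable_continuous_interval continuous_intros f)
  ultimately show ?thesis
    unfolding J_def[symmetric] Q_def[symmetric] by (metis real_le_rsqrt)
qed

lemma abs_diff_le_integral_abs_deriv:
  fixes f :: "real \<Rightarrow> real"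
  assumes f': "\<And>t. (f has_real_derivative f' t) (at t)" "continuous_on {a..b} f'"
    and "x \<in> {a..b}" "y \<in> {a..b}"
  shows "\<bar>f x - f y\<bar> \<le> integral {a..b} (\<lambda>t. \<bar>f' t\<bar>)"
proof -
  have "\<bar>f v - f u\<bar> \<le> integral {a..b} (\<lambda>t. \<bar>f' t\<bar>)" if "a \<le> u" "u \<le> v" "v \<le> b" for u v
  proof -
    have uv: "continuous_on {u..v} f'" using f'(2) by (rule continuous_on_subset) (use that in auto)
    have "(f' has_integral (f v - f u)) {u..v}"
      by (rule fundamental_theorem_of_calculus[OF \<open>u \<le> v\<close>])
        (auto simp: has_real_derivative_iff_has_vector_derivative[symmetric]
          intro: has_field_derivative_at_within f'(1))
    then have "\<bar>f v - f u\<bar> = \<bar>integral {u..v} f'\<bar>" by (simp add: integral_unique)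
    also have "\<dots> \<le> integral {u..v} (\<lambda>t. \<bar>f' t\<bar>)"
      using integral_norm_bound_integral[of f' "{u..v}" "\<lambda>t. \<bar>f' t\<bar>"]
      by (auto intro!: integrable_continuous_interval continuous_intros uv)
    also have "\<dots> \<le> integral {a..b} (\<lambda>t. \<bar>f' t\<bar>)"
      by (rule integral_subset_le)
        (use that in \<open>auto intro!: integrable_continuous_interval continuous_intros f'(2) uv\<close>)
    finally show ?thesis .
  qed
  from this[of x y] this[of y x] assms(3,4) show ?thesis
    by (cases "x \<le> y") (auto simp: abs_minus_commute)
qed

lemma periodic2pi_abs_le:
  fixes w w' :: "real \<Rightarrow> real"
  assumes w: "periodic2pi w" "\<And>x. (w has_real_derivative w' x) (at x)" "continuous_on UNIV w'"
  shows "\<bar>w x\<bar> \<le> sqrt (integral {0..2*pi} (\<lambda>t. (w t)\<^sup>2) / (2*pi)) + integral {0..2*pi} (\<lambda>t. \<bar>w' t\<bar>)"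
proof -
  have cw: "continuous_on {0..2*pi} (\<lambda>t. (w t)\<^sup>2)"
    using w(2) by (intro continuous_intros continuous_at_imp_continuous_on) (auto intro: DERIV_isCont)
  obtain y where y: "y \<in> {0..2*pi}" "\<And>t. t \<in> {0..2*pi} \<Longrightarrow> (w y)\<^sup>2 \<le> (w t)\<^sup>2"
    using continuous_attains_inf[OF compact_Icc _ cw] pi_gt_zero by auto
  have "2*pi * (w y)\<^sup>2 \<le> integral {0..2*pi} (\<lambda>t. (w t)\<^sup>2)"
    using integral_le[of "\<lambda>t. (w y)\<^sup>2" "{0..2*pi}" "\<lambda>t. (w t)\<^sup>2"] y(2) pi_gt_zero
    by (simp add: integrable_continuous_interval cw)
  then have wy: "\<bar>w y\<bar> \<le> sqrt (integral {0..2*pi} (\<lambda>t. (w t)\<^sup>2) / (2*pi))"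
    using pi_gt_zero by (intro real_le_rsqrt) (simp add: field_simps)
  obtain x' where x': "x' \<in> {0..2*pi}" "w x = w x'" using periodic2pi_in_period[OF w(1)] .
  have "\<bar>w x' - w y\<bar> \<le> integral {0..2*pi} (\<lambda>t. \<bar>w' t\<bar>)"
    by (rule abs_diff_le_integral_abs_deriv[OF w(2) continuous_on_subset[OF w(3)] x'(1) y(1)]) simp
  with wy x'(2) show ?thesis by linarith
qed

lemma periodic2pi_deriv_abs_le:
  fixes w w' w'' :: "real \<Rightarrow> real"
  assumes w: "periodic2pi w" "\<And>x. (w has_real_derivative w' x) (at x)"
    and w': "\<And>x. (w' has_real_derivative w'' x) (at x)" "continuous_on UNIV w''"
  shows "\<bar>w' x\<bar> \<le> integral {0..2*pi} (\<lambda>t. \<bar>w'' t\<bar>)"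
proof -
  obtain z where z: "0 < z" "z < 2*pi" "w (2*pi) - w 0 = (2*pi - 0) * w' z"
    using MVT2[of 0 "2*pi" w w'] w(2) pi_gt_zero by auto
  moreover have "w (2*pi) = w 0" using w(1) unfolding periodic2pi_def by (metis add_0)
  ultimately have "w' z = 0" by simp
  obtain x' where x': "x' \<in> {0..2*pi}" "w' x = w' x'"
    using periodic2pi_in_period[OF periodic2pi_deriv[OF w]] .
  have "\<bar>w' x' - w' z\<bar> \<le> integral {0..2*pi} (\<lambda>t. \<bar>w'' t\<bar>)"
    by (rule abs_diff_le_integral_abs_deriv[OF w'(1) continuous_on_subset[OF w'(2)] x'(1)])
      (use z in auto)
  with \<open>w' z = 0\<close> x'(2) show ?thesis by simp
qed

lemma continuous_imp_integrable_on_period: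
  fixes f :: "real \<Rightarrow> real"
  assumes "continuous_on UNIV f"
  shows "f integrable_on {0..2*pi}"
  by (rule integrable_continuous_interval) (rule continuous_on_subset[OF assms], simp)

section \<open>Limits of derivatives\<close>

lemma uniformly_Cauchy_on_sums_sqrt_bound:
  fixes f :: "nat \<Rightarrow> 'a \<Rightarrow> real"
  assumes a: "summable a"
    and bound: "\<And>m n x. x \<in> S \<Longrightarrow> \<bar>\<Sum>k\<in>{m..<n}. f k x\<bar> \<le> sqrt (\<Sum>k\<in>{m..<n}. a k)"
  shows "uniformly_Cauchy_on S (\<lambda>n x. \<Sum>k<n. f k x)"
proof (rule uniformly_Cauchy_onI')
  fix e :: real assume "e > 0"
  then obtain N where N: "\<And>m n. N \<le> m \<Longrightarrow> \<bar>\<Sum>k\<in>{m..<n}. a k\<bar> < e\<^sup>2"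
    using a unfolding summable_Cauchy by (metis real_norm_def zero_less_power)
  have "dist (\<Sum>k<m. f k x) (\<Sum>k<n. f k x) < e" if "x \<in> S" "N \<le> m" "m < n" for x m n
  proof -
    have "dist (\<Sum>k<m. f k x) (\<Sum>k<n. f k x) = \<bar>\<Sum>k\<in>{m..<n}. f k x\<bar>"
      using sum_diff_nat_ivl[of 0 m n "\<lambda>k. f k x"] \<open>m < n\<close>
      by (simp add: dist_real_def atLeast0LessThan abs_minus_commute)
    also have "\<dots> \<le> sqrt \<bar>\<Sum>k\<in>{m..<n}. a k\<bar>"
      using bound[OF \<open>x \<in> S\<close>, of m n] by (meson abs_ge_self order_trans real_sqrt_le_mono)
    also have "\<dots> < e"
      using real_sqrt_less_mono[OF N[OF \<open>N \<le> m\<close>, of n]] \<open>e > 0\<close> by simp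
    finally show ?thesis .
  qed
  then show "\<exists>M. \<forall>x\<in>S. \<forall>m\<ge>M. \<forall>n>m. dist (\<Sum>k<m. f k x) (\<Sum>k<n. f k x) < e"
    by blast
qed

lemma uniform_limit_sums_from_1:
  fixes f :: "nat \<Rightarrow> 'a \<Rightarrow> 'b::real_normed_vector"
  assumes "uniform_limit S (\<lambda>n x. \<Sum>k<n. f k x) T sequentially" "\<And>x. f 0 x = 0"
  shows "uniform_limit S (\<lambda>n x. \<Sum>k\<in>{1..n}. f k x) T sequentially"
proof -
  have "(\<Sum>k<Suc n. f k x) = (\<Sum>k\<in>{1..n}. f k x)" for n x
    using assms(2) by (simp add: sum.lessThan_Suc_shift sum.atLeast1_atMost_eq del: sum.lessThan_Suc)
  then show ?thesis
    using filterlim_compose[OF assms(1) filterlim_Suc] by (simp add: o_def)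
qed

lemma has_real_derivative_uniform_limit:
  fixes f f' :: "nat \<Rightarrow> real \<Rightarrow> real"
  assumes f': "\<And>n x. (f n has_real_derivative f' n x) (at x)"
    and f: "\<And>x. (\<lambda>n. f n x) \<longlonglongrightarrow> g x"
    and u: "uniform_limit UNIV f' g' sequentially"
  shows "(g has_real_derivative g' x) (at x)"
proof -
  have "\<exists>G. \<forall>x\<in>UNIV. (\<lambda>n. f n x) \<longlonglongrightarrow> G x \<and> (G has_derivative (\<lambda>h. g' x * h)) (at x within UNIV)"
  proof (rule has_derivative_sequence[OF convex_UNIV _ _ UNIV_I f])
    show "(f n has_derivative (\<lambda>h. f' n x * h)) (at x within UNIV)" for n x
      using f'[of n x] by (simp add: has_field_derivative_def)
  next
    fix e :: real assume "e > 0"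
    with u have "\<forall>\<^sub>F n in sequentially. \<forall>x. \<bar>f' n x - g' x\<bar> < e"
      by (auto simp: uniform_limit_iff dist_real_def)
    then show "\<forall>\<^sub>F n in sequentially. \<forall>x\<in>UNIV. \<forall>h. norm (f' n x * h - g' x * h) \<le> e * norm h"
      by eventually_elim (metis abs_ge_zero abs_mult left_diff_distrib less_imp_le mult_right_mono real_norm_def)
  qed
  then obtain G where "\<And>x. (\<lambda>n. f n x) \<longlonglongrightarrow> G x" "(G has_derivative (\<lambda>h. g' x * h)) (at x)"
    by blast
  moreover from this(1) f have "G = g" by (auto intro: LIMSEQ_unique)
  ultimately show ?thesis by (simp add: has_field_derivative_def)
qed

lemma integral_tendsto_L1_periodic:
  fixes f :: "nat \<Rightarrow> real \<Rightarrow> real"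
  assumes f: "\<And>n. continuous_on UNIV (f n)" "\<And>n. periodic2pi (f n)"
    and g: "continuous_on UNIV g" "periodic2pi g"
    and L1: "(\<lambda>n. integral {0..2*pi} (\<lambda>t. \<bar>f n t - g t\<bar>)) \<longlonglongrightarrow> 0"
    and y: "y \<in> {a..a+2*pi}"
  shows "(\<lambda>n. integral {a..y} (f n)) \<longlonglongrightarrow> integral {a..y} g"
proof -
  have "\<bar>integral {a..y} (f n) - integral {a..y} g\<bar> \<le> integral {0..2*pi} (\<lambda>t. \<bar>f n t - g t\<bar>)" for n
  proof -
    have c: "continuous_on UNIV (\<lambda>t. \<bar>f n t - g t\<bar>)" by (intro continuous_intros f g)
    have i: "f n integrable_on {a..y}" "g integrable_on {a..y}"
      "(\<lambda>t. \<bar>f n t - g t\<bar>) integrable_on {a..y}"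
      by (auto intro!: integrable_continuous_interval continuous_on_subset[OF c]
          continuous_on_subset[OF f(1)] continuous_on_subset[OF g(1)])
    have "\<bar>integral {a..y} (f n) - integral {a..y} g\<bar> = norm (integral {a..y} (\<lambda>t. f n t - g t))"
      by (simp add: integral_diff i)
    also have "\<dots> \<le> integral {a..y} (\<lambda>t. \<bar>f n t - g t\<bar>)"
      by (rule integral_norm_bound_integral) (auto intro: integrable_diff i)
    also have "\<dots> \<le> integral {a..a+2*pi} (\<lambda>t. \<bar>f n t - g t\<bar>)"
      by (rule integral_subset_le)
        (use y in \<open>auto intro!: integrable_continuous_interval continuous_on_subset[OF c]\<close>)
    also have "\<dots> = integral {0..2*pi} (\<lambda>t. \<bar>f n t - g t\<bar>)"
      using f(2)[of n] g(2) by (intro integral_period_shift c) (simp add: periodic2pi_def)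
    finally show ?thesis .
  qed
  then have "(\<lambda>n. integral {a..y} (f n) - integral {a..y} g) \<longlonglongrightarrow> 0"
    by (intro Lim_null_comparison[OF _ L1] always_eventually) simp
  then show ?thesis by (simp add: LIM_zero_iff)
qed

lemma has_real_derivative_L1_limit_periodic:
  fixes f f' :: "nat \<Rightarrow> real \<Rightarrow> real"
  assumes f': "\<And>n x. (f n has_real_derivative f' n x) (at x)"
      "\<And>n. continuous_on UNIV (f' n)" "\<And>n. periodic2pi (f' n)"
    and f: "\<And>x. (\<lambda>n. f n x) \<longlonglongrightarrow> g x"
    and u: "continuous_on UNIV u" "periodic2pi u"
    and L1: "(\<lambda>n. integral {0..2*pi} (\<lambda>t. \<bar>f' n t - u t\<bar>)) \<longlonglongrightarrow> 0"
  shows "(g has_real_derivative u x) (at x)"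
proof -
  define a where "a = x - 1"
  have g_eq: "g y = g a + integral {a..y} u" if "y \<in> {a..a+2*pi}" for y
  proof -
    have "(f' n has_integral (f n y - f n a)) {a..y}" for n
      by (rule fundamental_theorem_of_calculus)
        (use that in \<open>auto simp: has_real_derivative_iff_has_vector_derivative[symmetric]
          intro: has_field_derivative_at_within f'(1)\<close>)
    then have "f n y - f n a = integral {a..y} (f' n)" for n
      by (rule integral_unique[symmetric])
    then have "(\<lambda>n. f n y - f n a) \<longlonglongrightarrow> integral {a..y} u"
      using integral_tendsto_L1_periodic[OF f'(2,3) u L1 that] by simp
    moreover have "(\<lambda>n. f n y - f n a) \<longlonglongrightarrow> g y - g a" by (intro tendsto_diff f)
    ultimately show ?thesis using LIMSEQ_unique by fastforce
  qed
  have x: "x \<in> {a<..<a+2*pi}" using pi_gt3 by (simp add: a_def)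
  have "((\<lambda>y. g a + integral {a..y} u) has_real_derivative u x) (at x)"
    using DERIV_add[OF DERIV_const has_real_derivative_integral_at[OF u(1), of a x]] x by simp
  then show ?thesis
  proof (rule has_field_derivative_transform_within_open[OF _ open_greaterThanLessThan x])
    fix y :: real assume "y \<in> {a<..<a+2*pi}"
    then show "g a + integral {a..y} u = g y" using g_eq[of y] by simp
  qed
qed

lemma integral_abs_diff_tendsto_uniform_limit:
  fixes f :: "nat \<Rightarrow> real \<Rightarrow> real"
  assumes u: "uniform_limit {a..b} f g sequentially"
    and c: "\<And>n. continuous_on {a..b} (f n)" "continuous_on {a..b} g"
  shows "(\<lambda>n. integral {a..b} (\<lambda>x. \<bar>f n x - g x\<bar>)) \<longlonglongrightarrow> 0"
proof -
  have "uniform_limit {a..b} (\<lambda>n x. \<bar>f n x - g x\<bar>) (\<lambda>x. 0) sequentially"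
    using uniform_limit_norm[OF uniform_limit_minus[OF u uniform_limit_const[where c = g]]] by simp
  then obtain I J where I: "\<And>n. ((\<lambda>x. \<bar>f n x - g x\<bar>) has_integral I n) {a..b}"
    and J: "((\<lambda>x. 0) has_integral J) {a..b}" and IJ: "I \<longlonglongrightarrow> J"
    by (rule uniform_limit_integral) (auto intro!: continuous_intros c)
  have "J = 0" using has_integral_unique[OF J has_integral_0] .
  moreover have "integral {a..b} (\<lambda>x. \<bar>f n x - g x\<bar>) = I n" for n using I by (rule integral_unique)
  ultimately show ?thesis using IJ by simp
qed

section \<open>Expansions in the eigenbasis\<close>

lemma resolvent_coeff_bound:
  fixes l g \<beta> :: real
  assumes "1 \<le> \<bar>l - g\<bar>"
  shows "(\<beta> / (l - g))\<^sup>2 * (1 + l\<^sup>2) \<le> (3 + 2 * g\<^sup>2) * \<beta>\<^sup>2"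
proof -
  have "l\<^sup>2 \<le> 2 * (l - g)\<^sup>2 + 2 * g\<^sup>2"
    using sum_squares_ge_zero[of "l - 2 * g" 0] by (simp add: power2_eq_square algebra_simps)
  moreover have "1 \<le> (l - g)\<^sup>2" using abs_le_square_iff[of 1 "l - g"] assms by simp
  ultimately have "1 + l\<^sup>2 \<le> (3 + 2 * g\<^sup>2) * (l - g)\<^sup>2"
    using mult_left_mono[of 1 "(l - g)\<^sup>2" "2 * g\<^sup>2"] by (simp add: algebra_simps)
  then have "\<beta>\<^sup>2 * (1 + l\<^sup>2) \<le> \<beta>\<^sup>2 * ((3 + 2 * g\<^sup>2) * (l - g)\<^sup>2)"
    by (rule mult_left_mono) simp
  moreover have "(l - g)\<^sup>2 \<noteq> 0" using assms by auto
  ultimately show ?thesis by (simp add: power_divide field_simps)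
qed

lemma summable_resolvent_coeffs:
  fixes lam \<beta> c :: "nat \<Rightarrow> real"
  assumes lam: "filterlim lam at_bot sequentially" and \<beta>: "summable (\<lambda>k. (\<beta> k)\<^sup>2)"
    and c: "\<forall>\<^sub>F k in sequentially. c k = \<beta> k / (lam k - g)"
  shows "summable (\<lambda>k. (c k)\<^sup>2 * (1 + (lam k)\<^sup>2))"
proof (rule summable_comparison_test_ev)
  have "\<forall>\<^sub>F k in sequentially. lam k \<le> g - 1"
    using lam by (simp add: filterlim_at_bot)
  with c show "\<forall>\<^sub>F k in sequentially. norm ((c k)\<^sup>2 * (1 + (lam k)\<^sup>2)) \<le> (3 + 2 * g\<^sup>2) * (\<beta> k)\<^sup>2"
  proof eventually_elim
    case (elim k)
    then show ?case using resolvent_coeff_bound[of "lam k" g "\<beta> k"] by simp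
  qed
  show "summable (\<lambda>k. (3 + 2 * g\<^sup>2) * (\<beta> k)\<^sup>2)" using \<beta> by (rule summable_mult)
qed

lemma sum_resolvent_split:
  fixes c \<beta> lam f :: "nat \<Rightarrow> real"
  assumes c: "\<And>k. K \<le> k \<Longrightarrow> c k * (lam k - g) = \<beta> k" and "K \<le> n"
  shows "(\<Sum>k<n. (c k * lam k) * f k)
    = (\<Sum>k<n. \<beta> k * f k) + g * (\<Sum>k<n. c k * f k) + (\<Sum>k<K. (c k * lam k - \<beta> k - g * c k) * f k)"
proof -
  have "(\<Sum>k<n. (c k * lam k) * f k)
      = (\<Sum>k<n. \<beta> k * f k + g * (c k * f k) + (c k * lam k - \<beta> k - g * c k) * f k)"
    by (simp add: algebra_simps)
  also have "\<dots> = (\<Sum>k<n. \<beta> k * f k) + g * (\<Sum>k<n. c k * f k)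
      + (\<Sum>k<n. (c k * lam k - \<beta> k - g * c k) * f k)"
    by (simp add: sum.distrib sum_distrib_left)
  also have "(\<Sum>k<n. (c k * lam k - \<beta> k - g * c k) * f k) = (\<Sum>k<K. (c k * lam k - \<beta> k - g * c k) * f k)"
    using c \<open>K \<le> n\<close> by (intro sum.mono_neutral_right) (auto simp: algebra_simps)
  finally show ?thesis .
qed

locale circle_eigenbasis =
  fixes \<sigma> :: real and A :: "real \<Rightarrow> real" and b b' :: "nat \<Rightarrow> real \<Rightarrow> real" and lam :: "nat \<Rightarrow> real"
  assumes sigma_pos: "\<sigma> > 0"
    and A_continuous: "continuous_on UNIV A" and A_periodic: "periodic2pi A"
    and b_periodic: "\<And>k. periodic2pi (b k)"
    and b_deriv: "\<And>k x. (b k has_real_derivative b' k x) (at x)"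
    and b'_deriv: "\<And>k x. (b' k has_real_derivative (lam k - A x) * b k x / \<sigma>) (at x)"
    and b_orthonormal: "\<And>j k. integral {0..2*pi} (\<lambda>x. b j x * b k x) = (if j = k then 1 else 0)"
    and b_complete: "\<And>f. continuous_on UNIV f \<Longrightarrow>
      (\<lambda>n. integral {0..2*pi} (\<lambda>x. (f x - (\<Sum>k<n. integral {0..2*pi} (\<lambda>y. f y * b k y) * b k x))\<^sup>2))
        \<longlonglongrightarrow> 0"
    and lam_to_bot: "filterlim lam at_bot sequentially"
begin

lemma continuous_on_b [continuous_intros]: "continuous_on S (b k)"
  using b_deriv by (meson DERIV_isCont continuous_at_imp_continuous_on)

lemma continuous_on_b' [continuous_intros]: "continuous_on S (b' k)"
  using b'_deriv by (meson DERIV_isCont continuous_at_imp_continuous_on)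

lemma continuous_on_A [continuous_intros]: "continuous_on S A"
  using A_continuous continuous_on_subset by blast

definition fourier_coeff :: "(real \<Rightarrow> real) \<Rightarrow> nat \<Rightarrow> real" where
  "fourier_coeff f k = integral {0..2*pi} (\<lambda>y. f y * b k y)"

lemma integral_eigen_sum_mult:
  assumes "finite F"
  shows "integral {0..2*pi} (\<lambda>x. (\<Sum>k\<in>F. c k * b k x) * (\<Sum>j\<in>F. d j * b j x)) = (\<Sum>k\<in>F. c k * d k)"
proof -
  have "integral {0..2*pi} (\<lambda>x. (\<Sum>k\<in>F. c k * b k x) * (\<Sum>j\<in>F. d j * b j x))
      = integral {0..2*pi} (\<lambda>x. \<Sum>k\<in>F. \<Sum>j\<in>F. c k * d j * (b k x * b j x))"
    by (simp add: sum_product algebra_simps)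
  also have "\<dots> = (\<Sum>k\<in>F. \<Sum>j\<in>F. c k * d j * integral {0..2*pi} (\<lambda>x. b k x * b j x))"
    using assms by (simp add: integral_sum integrable_sum continuous_imp_integrable_on_period continuous_intros)
  also have "\<dots> = (\<Sum>k\<in>F. c k * d k)"
    using assms by (simp add: b_orthonormal if_distrib sum.delta cong: if_cong)
  finally show ?thesis .
qed

lemma integral_eigen_sum_square:
  "finite F \<Longrightarrow> integral {0..2*pi} (\<lambda>x. (\<Sum>k\<in>F. c k * b k x)\<^sup>2) = (\<Sum>k\<in>F. (c k)\<^sup>2)"
  using integral_eigen_sum_mult[of F c c] by (simp add: power2_eq_square)

lemma integral_abs_eigen_sum_le:
  assumes "finite F"
  shows "integral {0..2*pi} (\<lambda>x. \<bar>\<Sum>k\<in>F. c k * b k x\<bar>) \<le> sqrt (2*pi * (\<Sum>k\<in>F. (c k)\<^sup>2))"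
  using integral_abs_le_sqrt_integral_square[of 0 "2*pi" "\<lambda>x. \<Sum>k\<in>F. c k * b k x"]
  by (simp add: integral_eigen_sum_square[OF assms] continuous_intros)

lemma integral_mult_eigen_sum:
  assumes "finite F" "continuous_on UNIV f"
  shows "integral {0..2*pi} (\<lambda>x. f x * (\<Sum>k\<in>F. c k * b k x)) = (\<Sum>k\<in>F. c k * fourier_coeff f k)"
proof -
  have "(\<lambda>x. f x * (\<Sum>k\<in>F. c k * b k x)) = (\<lambda>x. \<Sum>k\<in>F. c k * (f x * b k x))"
    by (simp add: sum_distrib_left algebra_simps)
  then show ?thesis
    using assms by (simp add: fourier_coeff_def integral_sum continuous_imp_integrable_on_period continuous_intros)
qed

lemma summable_fourier_coeff_square:
  assumes f: "continuous_on UNIV f"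
  shows "summable (\<lambda>k. (fourier_coeff f k)\<^sup>2)"
proof (rule summableI_nonneg_bounded)
  fix n
  define P where "P x = (\<Sum>k<n. fourier_coeff f k * b k x)" for x
  have "integral {0..2*pi} (\<lambda>x. (f x - P x)\<^sup>2)
      = integral {0..2*pi} (\<lambda>x. (f x)\<^sup>2 - 2 * (f x * P x) + (P x)\<^sup>2)"
    by (simp add: power2_diff algebra_simps)
  also have "\<dots> = integral {0..2*pi} (\<lambda>x. (f x)\<^sup>2) - 2 * integral {0..2*pi} (\<lambda>x. f x * P x)
        + integral {0..2*pi} (\<lambda>x. (P x)\<^sup>2)"
    unfolding P_def
    by (subst integral_add integral_diff integral_mult_right,
        auto intro!: continuous_imp_integrable_on_period continuous_intros f)+
  also have "\<dots> = integral {0..2*pi} (\<lambda>x. (f x)\<^sup>2) - (\<Sum>k<n. (fourier_coeff f k)\<^sup>2)"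
    unfolding P_def
    by (simp add: integral_mult_eigen_sum f integral_eigen_sum_square flip: power2_eq_square)
  finally show "(\<Sum>k<n. (fourier_coeff f k)\<^sup>2) \<le> integral {0..2*pi} (\<lambda>x. (f x)\<^sup>2)"
    using integral_nonneg[of "\<lambda>x. (f x - P x)\<^sup>2" "{0..2*pi}"]
    by (simp add: P_def continuous_imp_integrable_on_period continuous_intros f)
qed simp

lemma fourier_sum_L1_tendsto:
  assumes f: "continuous_on UNIV f"
  shows "(\<lambda>n. integral {0..2*pi} (\<lambda>x. \<bar>f x - (\<Sum>k<n. fourier_coeff f k * b k x)\<bar>)) \<longlonglongrightarrow> 0"
proof (rule Lim_null_comparison)
  let ?L2 = "\<lambda>n. integral {0..2*pi} (\<lambda>x. (f x - (\<Sum>k<n. fourier_coeff f k * b k x))\<^sup>2)"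
  show "\<forall>\<^sub>F n in sequentially. norm (integral {0..2*pi} (\<lambda>x. \<bar>f x - (\<Sum>k<n. fourier_coeff f k * b k x)\<bar>))
      \<le> sqrt (2*pi * ?L2 n)"
  proof (intro always_eventually allI)
    fix n
    let ?R = "\<lambda>x. f x - (\<Sum>k<n. fourier_coeff f k * b k x)"
    have R: "continuous_on UNIV ?R" by (intro continuous_intros f)
    then have "0 \<le> integral {0..2*pi} (\<lambda>x. \<bar>?R x\<bar>)"
      by (intro integral_nonneg continuous_imp_integrable_on_period continuous_intros f) auto
    then show "norm (integral {0..2*pi} (\<lambda>x. \<bar>?R x\<bar>)) \<le> sqrt (2*pi * ?L2 n)"
      using integral_abs_le_sqrt_integral_square[OF continuous_on_subset[OF R], where a=0 and b="2*pi"]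
      by simp
  qed
  show "(\<lambda>n. sqrt (2*pi * ?L2 n)) \<longlonglongrightarrow> 0"
    using tendsto_real_sqrt[OF tendsto_mult_left[OF b_complete[OF f], of "2*pi"]]
    by (simp add: fourier_coeff_def)
qed

lemma eigen_sum_deriv2:
  "((\<lambda>x. \<Sum>k\<in>F. c k * b' k x) has_real_derivative
     ((\<Sum>k\<in>F. (c k * lam k) * b k x) - A x * (\<Sum>k\<in>F. c k * b k x)) / \<sigma>) (at x)"
proof -
  have "((\<lambda>x. \<Sum>k\<in>F. c k * b' k x) has_real_derivative
      (\<Sum>k\<in>F. c k * ((lam k - A x) * b k x / \<sigma>))) (at x)"
    by (intro DERIV_sum DERIV_cmult b'_deriv)
  also have "(\<Sum>k\<in>F. c k * ((lam k - A x) * b k x / \<sigma>))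
      = ((\<Sum>k\<in>F. (c k * lam k) * b k x) - A x * (\<Sum>k\<in>F. c k * b k x)) / \<sigma>"
    by (simp add: sum_divide_distrib[symmetric] sum_distrib_left sum_subtractf[symmetric] algebra_simps)
  finally show ?thesis .
qed

lemma integral_abs_eigen_sum_deriv2_le:
  obtains C where "\<And>F c. finite F \<Longrightarrow>
    integral {0..2*pi} (\<lambda>x. \<bar>((\<Sum>k\<in>F. (c k * lam k) * b k x) - A x * (\<Sum>k\<in>F. c k * b k x)) / \<sigma>\<bar>)
      \<le> C * sqrt (\<Sum>k\<in>F. (c k)\<^sup>2 * (1 + (lam k)\<^sup>2))"
proof -
  obtain M where M: "\<And>x. \<bar>A x\<bar> \<le> M" using periodic2pi_bounded[OF A_continuous A_periodic] by blast
  define C where "C = (1 + M) * sqrt (2*pi) / \<sigma>"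
  have "integral {0..2*pi} (\<lambda>x. \<bar>(P x - A x * w x) / \<sigma>\<bar>) \<le> C * sqrt S"
    if F: "finite F" and S: "S = (\<Sum>k\<in>F. (c k)\<^sup>2 * (1 + (lam k)\<^sup>2))"
      and w: "w = (\<lambda>x. \<Sum>k\<in>F. c k * b k x)" and P: "P = (\<lambda>x. \<Sum>k\<in>F. (c k * lam k) * b k x)"
    for F c S w P
  proof -
    have cont: "continuous_on UNIV w" "continuous_on UNIV P"
      unfolding w P by (auto intro!: continuous_intros)
    have "(\<Sum>k\<in>F. (c k)\<^sup>2) \<le> S" "(\<Sum>k\<in>F. (c k * lam k)\<^sup>2) \<le> S"
      unfolding S by (auto intro!: sum_mono simp: power_mult_distrib algebra_simps)
    then have L1: "integral {0..2*pi} (\<lambda>t. \<bar>w t\<bar>) \<le> sqrt (2*pi) * sqrt S"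
        "integral {0..2*pi} (\<lambda>t. \<bar>P t\<bar>) \<le> sqrt (2*pi) * sqrt S"
      unfolding w P
      using integral_abs_eigen_sum_le[OF F, of c] integral_abs_eigen_sum_le[OF F, of "\<lambda>k. c k * lam k"]
      by (smt (verit, best) mult_left_mono pi_ge_zero real_sqrt_le_mono real_sqrt_mult)+
    have "integral {0..2*pi} (\<lambda>t. \<bar>(P t - A t * w t) / \<sigma>\<bar>)
        \<le> integral {0..2*pi} (\<lambda>t. (\<bar>P t\<bar> + M * \<bar>w t\<bar>) / \<sigma>)"
    proof (rule integral_le)
      show "\<bar>(P t - A t * w t) / \<sigma>\<bar> \<le> (\<bar>P t\<bar> + M * \<bar>w t\<bar>) / \<sigma>" for t
        using sigma_pos abs_triangle_ineq4[of "P t" "A t * w t"] mult_right_mono[OF M abs_ge_zero, of t "w t"]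
        by (simp add: abs_mult divide_right_mono)
    qed (use sigma_pos in \<open>auto intro!: continuous_imp_integrable_on_period continuous_intros cont\<close>)
    also have "\<dots> = (integral {0..2*pi} (\<lambda>t. \<bar>P t\<bar>) + M * integral {0..2*pi} (\<lambda>t. \<bar>w t\<bar>)) / \<sigma>"
      by (simp add: integral_add integral_divide continuous_imp_integrable_on_period continuous_intros cont)
    also have "\<dots> \<le> C * sqrt S"
      using L1 M[of 0] sigma_pos
      by (auto simp: C_def field_simps intro!: add_mono mult_left_mono divide_right_mono)
    finally show ?thesis .
  qed
  then show thesis by (intro that) blast
qed

lemma eigen_sum_sup_bound:
  obtains C where
    "\<And>F c x. finite F \<Longrightarrow> \<bar>\<Sum>k\<in>F. c k * b k x\<bar> \<le> C * sqrt (\<Sum>k\<in>F. (c k)\<^sup>2 * (1 + (lam k)\<^sup>2))"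
    "\<And>F c x. finite F \<Longrightarrow> \<bar>\<Sum>k\<in>F. c k * b' k x\<bar> \<le> C * sqrt (\<Sum>k\<in>F. (c k)\<^sup>2 * (1 + (lam k)\<^sup>2))"
proof -
  obtain C'' where C'': "\<And>F c. finite F \<Longrightarrow>
    integral {0..2*pi} (\<lambda>x. \<bar>((\<Sum>k\<in>F. (c k * lam k) * b k x) - A x * (\<Sum>k\<in>F. c k * b k x)) / \<sigma>\<bar>)
      \<le> C'' * sqrt (\<Sum>k\<in>F. (c k)\<^sup>2 * (1 + (lam k)\<^sup>2))"
    by (rule integral_abs_eigen_sum_deriv2_le) blast
  define C where "C = sqrt (1 / (2*pi)) + (2*pi + 1) * C''"
  have "\<bar>w x\<bar> \<le> C * sqrt S \<and> \<bar>w' x\<bar> \<le> C * sqrt S"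
    if F: "finite F" and S: "S = (\<Sum>k\<in>F. (c k)\<^sup>2 * (1 + (lam k)\<^sup>2))"
      and w: "w = (\<lambda>x. \<Sum>k\<in>F. c k * b k x)" and w': "w' = (\<lambda>x. \<Sum>k\<in>F. c k * b' k x)"
    for F c x S w w'
  proof -
    define w'' where "w'' x = ((\<Sum>k\<in>F. (c k * lam k) * b k x) - A x * w x) / \<sigma>" for x
    have dw: "(w has_real_derivative w' x) (at x)" for x
      unfolding w w' by (intro DERIV_sum DERIV_cmult b_deriv)
    have dw': "(w' has_real_derivative w'' x) (at x)" for x
      unfolding w' w''_def w by (rule eigen_sum_deriv2)
    have cont: "continuous_on UNIV w'" "continuous_on UNIV w''"
      unfolding w''_def w' w using sigma_pos by (auto intro!: continuous_intros)
    have pw: "periodic2pi w" using b_periodic by (simp add: w periodic2pi_def)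
    have S_ge: "(\<Sum>k\<in>F. (c k)\<^sup>2) \<le> S" "0 \<le> S"
      unfolding S by (auto intro!: sum_mono sum_nonneg simp: algebra_simps)
    have bound': "\<bar>w' y\<bar> \<le> C'' * sqrt S" for y
      using periodic2pi_deriv_abs_le[OF pw dw dw' cont(2), of y] C''[OF F, of c]
      by (simp add: w''_def w S)
    have "\<bar>w x\<bar> \<le> sqrt (integral {0..2*pi} (\<lambda>t. (w t)\<^sup>2) / (2*pi)) + integral {0..2*pi} (\<lambda>t. \<bar>w' t\<bar>)"
      by (rule periodic2pi_abs_le[OF pw dw cont(1)])
    also have "\<dots> \<le> sqrt (1 / (2*pi)) * sqrt S + 2*pi * (C'' * sqrt S)"
    proof (rule add_mono)
      show "sqrt (integral {0..2*pi} (\<lambda>t. (w t)\<^sup>2) / (2*pi)) \<le> sqrt (1 / (2*pi)) * sqrt S"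
        using S_ge by (simp add: w integral_eigen_sum_square[OF F] real_sqrt_divide divide_right_mono)
      have "integral {0..2*pi} (\<lambda>t. \<bar>w' t\<bar>) \<le> integral {0..2*pi} (\<lambda>t. C'' * sqrt S)"
        by (rule integral_le) (auto intro!: continuous_imp_integrable_on_period continuous_intros cont bound')
      then show "integral {0..2*pi} (\<lambda>t. \<bar>w' t\<bar>) \<le> 2*pi * (C'' * sqrt S)"
        by (simp add: mult_ac)
    qed
    finally show ?thesis
      using bound'[of x] S_ge by (auto simp: C_def algebra_simps intro: order_trans)
  qed
  then show thesis by (intro that) blast+
qed

lemma eigen_series_C1:
  assumes c: "summable (\<lambda>k. (c k)\<^sup>2 * (1 + (lam k)\<^sup>2))"
  obtains v v' where "uniform_limit UNIV (\<lambda>n x. \<Sum>k<n. c k * b k x) v sequentially"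
    "uniform_limit UNIV (\<lambda>n x. \<Sum>k<n. c k * b' k x) v' sequentially"
    "\<And>x. (v has_real_derivative v' x) (at x)"
proof -
  obtain C where C: "\<And>F c x. finite F \<Longrightarrow> \<bar>\<Sum>k\<in>F. c k * b k x\<bar> \<le> C * sqrt (\<Sum>k\<in>F. (c k)\<^sup>2 * (1 + (lam k)\<^sup>2))"
    "\<And>F c x. finite F \<Longrightarrow> \<bar>\<Sum>k\<in>F. c k * b' k x\<bar> \<le> C * sqrt (\<Sum>k\<in>F. (c k)\<^sup>2 * (1 + (lam k)\<^sup>2))"
    by (rule eigen_sum_sup_bound) blast
  define a where "a k = C\<^sup>2 * ((c k)\<^sup>2 * (1 + (lam k)\<^sup>2))" for k
  have a: "summable a" unfolding a_def by (intro summable_mult c)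
  have sqrt_a: "C * sqrt (\<Sum>k\<in>F. (c k)\<^sup>2 * (1 + (lam k)\<^sup>2)) \<le> sqrt (\<Sum>k\<in>F. a k)" for F
  proof -
    have "C * sqrt (\<Sum>k\<in>F. (c k)\<^sup>2 * (1 + (lam k)\<^sup>2)) \<le> \<bar>C\<bar> * sqrt (\<Sum>k\<in>F. (c k)\<^sup>2 * (1 + (lam k)\<^sup>2))"
      by (intro mult_right_mono) (auto intro: sum_nonneg)
    then show ?thesis by (simp add: a_def real_sqrt_mult sum_distrib_left[symmetric])
  qed
  have "uniformly_convergent_on UNIV (\<lambda>n x. \<Sum>k<n. c k * b k x)"
    "uniformly_convergent_on UNIV (\<lambda>n x. \<Sum>k<n. c k * b' k x)"
    using C order_trans[OF _ sqrt_a]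
    by (intro Cauchy_uniformly_convergent uniformly_Cauchy_on_sums_sqrt_bound[OF a], blast)+
  then obtain v v' where v: "uniform_limit UNIV (\<lambda>n x. \<Sum>k<n. c k * b k x) v sequentially"
    and v': "uniform_limit UNIV (\<lambda>n x. \<Sum>k<n. c k * b' k x) v' sequentially"
    unfolding uniformly_convergent_on_def by blast
  have "(v has_real_derivative v' x) (at x)" for x
  proof (rule has_real_derivative_uniform_limit[OF _ _ v'])
    show "((\<lambda>x. \<Sum>k<n. c k * b k x) has_real_derivative (\<Sum>k<n. c k * b' k x)) (at x)" for n x
      by (intro DERIV_sum DERIV_cmult b_deriv)
    show "(\<lambda>n. \<Sum>k<n. c k * b k x) \<longlonglongrightarrow> v x" for x
      using v by (rule tendsto_uniform_limitI) simp
  qed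
  with v v' show thesis by (rule that)
qed

lemma eigen_series_deriv2_L1_limit:
  assumes h: "continuous_on UNIV h" "periodic2pi h"
    and c: "\<And>k. K \<le> k \<Longrightarrow> c k * (lam k - g) = fourier_coeff h k"
    and v: "uniform_limit UNIV (\<lambda>n x. \<Sum>k<n. c k * b k x) v sequentially"
      "continuous_on UNIV v" "periodic2pi v"
  obtains u where "continuous_on UNIV u" "periodic2pi u"
    "(\<lambda>n. integral {0..2*pi} (\<lambda>x.
        \<bar>((\<Sum>k<n. (c k * lam k) * b k x) - A x * (\<Sum>k<n. c k * b k x)) / \<sigma> - u x\<bar>)) \<longlonglongrightarrow> 0"
proof -
  define \<beta> where "\<beta> = fourier_coeff h"
  define W where "W n x = (\<Sum>k<n. c k * b k x)" for n x
  \<comment> \<open>the resolvent relation may fail for \<open>k < K\<close>; \<open>D\<close> absorbs those terms\<close>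
  define D where "D x = (\<Sum>k<K. (c k * lam k - \<beta> k - g * c k) * b k x)" for x
  define u where "u x = (h x + D x + (g - A x) * v x) / \<sigma>" for x
  have expand: "(\<Sum>k<n. (c k * lam k) * b k x) = (\<Sum>k<n. \<beta> k * b k x) + g * W n x + D x"
    if "K \<le> n" for n x
    unfolding W_def D_def \<beta>_def by (rule sum_resolvent_split[OF c that])
  have "continuous_on UNIV (\<lambda>x. g - A x)" "periodic2pi (\<lambda>x. g - A x)"
    using A_periodic by (auto intro: continuous_intros simp: periodic2pi_def)
  then obtain M where M: "\<And>x. \<bar>g - A x\<bar> \<le> M" by (rule periodic2pi_bounded) blast
  let ?E = "\<lambda>n x. \<bar>((\<Sum>k<n. (c k * lam k) * b k x) - A x * W n x) / \<sigma> - u x\<bar>"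
  let ?R = "\<lambda>n x. \<bar>h x - (\<Sum>k<n. \<beta> k * b k x)\<bar>"
  have "(\<lambda>n. integral {0..2*pi} (?E n)) \<longlonglongrightarrow> 0"
  proof (rule Lim_null_comparison)
    have "integral {0..2*pi} (?E n)
        \<le> (integral {0..2*pi} (?R n) + M * integral {0..2*pi} (\<lambda>x. \<bar>W n x - v x\<bar>)) / \<sigma>"
      if "K \<le> n" for n
    proof -
      have "integral {0..2*pi} (?E n) \<le> integral {0..2*pi} (\<lambda>x. (?R n x + M * \<bar>W n x - v x\<bar>) / \<sigma>)"
      proof (rule integral_le)
        fix x
        have "((\<Sum>k<n. (c k * lam k) * b k x) - A x * W n x) / \<sigma> - u x
            = ((\<Sum>k<n. \<beta> k * b k x) - h x + (g - A x) * (W n x - v x)) / \<sigma>"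
          using expand[OF that, of x] sigma_pos by (simp add: u_def field_simps)
        moreover have "\<bar>(\<Sum>k<n. \<beta> k * b k x) - h x + (g - A x) * (W n x - v x)\<bar>
            \<le> ?R n x + M * \<bar>W n x - v x\<bar>"
          using abs_triangle_ineq[of "(\<Sum>k<n. \<beta> k * b k x) - h x" "(g - A x) * (W n x - v x)"]
            mult_right_mono[OF M abs_ge_zero, of x "W n x - v x"]
          by (simp add: abs_mult abs_minus_commute)
        ultimately show "?E n x \<le> (?R n x + M * \<bar>W n x - v x\<bar>) / \<sigma>"
          using sigma_pos by (simp add: divide_right_mono)
      qed (use sigma_pos in \<open>auto intro!: continuous_imp_integrable_on_period continuous_intros h(1) v(2)
            simp: W_def u_def D_def\<close>)
      also have "\<dots> = (integral {0..2*pi} (?R n) + M * integral {0..2*pi} (\<lambda>x. \<bar>W n x - v x\<bar>)) / \<sigma>"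
        by (simp add: integral_add integral_divide continuous_imp_integrable_on_period continuous_intros h(1) v(2) W_def)
      finally show ?thesis .
    qed
    moreover have "0 \<le> integral {0..2*pi} (?E n)" for n
      by (rule integral_nonneg) (use sigma_pos in \<open>auto intro!: continuous_imp_integrable_on_period
          continuous_intros h(1) v(2) simp: W_def u_def D_def\<close>)
    ultimately show "\<forall>\<^sub>F n in sequentially. norm (integral {0..2*pi} (?E n))
        \<le> (integral {0..2*pi} (?R n) + M * integral {0..2*pi} (\<lambda>x. \<bar>W n x - v x\<bar>)) / \<sigma>"
      unfolding eventually_sequentially by auto
    have "(\<lambda>n. integral {0..2*pi} (\<lambda>x. \<bar>W n x - v x\<bar>)) \<longlonglongrightarrow> 0"
      using v unfolding W_def
      by (intro integral_abs_diff_tendsto_uniform_limit uniform_limit_on_subset[OF v(1)]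
          continuous_on_subset[OF v(2)] continuous_intros) auto
    from tendsto_divide_zero[OF tendsto_add_zero[OF fourier_sum_L1_tendsto[OF h(1)] tendsto_mult_right_zero[OF this]]]
    show "(\<lambda>n. (integral {0..2*pi} (?R n) + M * integral {0..2*pi} (\<lambda>x. \<bar>W n x - v x\<bar>)) / \<sigma>)
        \<longlonglongrightarrow> 0"
      by (simp add: \<beta>_def)
  qed
  moreover have "continuous_on UNIV u"
    unfolding u_def D_def using sigma_pos by (auto intro!: continuous_intros h(1) v(2))
  moreover have "periodic2pi u"
    using h(2) v(3) A_periodic b_periodic by (simp add: u_def D_def periodic2pi_def)
  ultimately show thesis using that unfolding W_def by blast
qed

lemma eigen_series_C2:
  assumes h: "continuous_on UNIV h" "periodic2pi h"
    and c: "\<forall>\<^sub>F k in sequentially. c k = fourier_coeff h k / (lam k - g)"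
  shows "\<exists>v. uniform_limit UNIV (\<lambda>n x. \<Sum>k<n. c k * b k x) v sequentially \<and> C2_circle v"
proof -
  obtain v v' where v: "uniform_limit UNIV (\<lambda>n x. \<Sum>k<n. c k * b k x) v sequentially"
    and v': "uniform_limit UNIV (\<lambda>n x. \<Sum>k<n. c k * b' k x) v' sequentially"
    and dv: "\<And>x. (v has_real_derivative v' x) (at x)"
    using summable_resolvent_coeffs[OF lam_to_bot summable_fourier_coeff_square[OF h(1)] c]
    by (rule eigen_series_C1) blast
  have pv: "periodic2pi v"
    by (rule periodic2pi_tendsto[of "\<lambda>n x. \<Sum>k<n. c k * b k x"])
      (use b_periodic tendsto_uniform_limitI[OF v] in \<open>auto simp: periodic2pi_def\<close>)
  have cv: "continuous_on UNIV v"
    using dv by (meson DERIV_isCont continuous_at_imp_continuous_on)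
  have "\<forall>\<^sub>F k in sequentially. lam k \<le> g - 1"
    using lam_to_bot by (simp add: filterlim_at_bot)
  with c have "\<forall>\<^sub>F k in sequentially. c k * (lam k - g) = fourier_coeff h k"
    by eventually_elim simp
  then obtain K where "\<And>k. K \<le> k \<Longrightarrow> c k * (lam k - g) = fourier_coeff h k"
    unfolding eventually_sequentially by blast
  then obtain u where u: "continuous_on UNIV u" "periodic2pi u"
    "(\<lambda>n. integral {0..2*pi} (\<lambda>x.
        \<bar>((\<Sum>k<n. (c k * lam k) * b k x) - A x * (\<Sum>k<n. c k * b k x)) / \<sigma> - u x\<bar>)) \<longlonglongrightarrow> 0"
    by (rule eigen_series_deriv2_L1_limit[OF h _ v cv pv])
  have "(v' has_real_derivative u x) (at x)" for x
  proof (rule has_real_derivative_L1_limit_periodic[OF eigen_sum_deriv2 _ _ _ u])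
    show "continuous_on UNIV (\<lambda>x. ((\<Sum>k<n. (c k * lam k) * b k x) - A x * (\<Sum>k<n. c k * b k x)) / \<sigma>)"
      for n using sigma_pos by (auto intro!: continuous_intros)
    show "periodic2pi (\<lambda>x. ((\<Sum>k<n. (c k * lam k) * b k x) - A x * (\<Sum>k<n. c k * b k x)) / \<sigma>)"
      for n using A_periodic b_periodic by (simp add: periodic2pi_def)
    show "(\<lambda>n. \<Sum>k<n. c k * b' k x) \<longlonglongrightarrow> v' x" for x
      using v' by (rule tendsto_uniform_limitI) simp
  qed
  with v pv dv u(1) show ?thesis unfolding C2_circle_def by blast
qed

end

lemma C2_circle_add:
  assumes "C2_circle f" "C2_circle g"
  shows "C2_circle (\<lambda>x. f x + g x)"
proof -
  obtain f' f'' g' g'' where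
    f: "periodic2pi f" "\<And>x. (f has_real_derivative f' x) (at x)"
      "\<And>x. (f' has_real_derivative f'' x) (at x)" "continuous_on UNIV f''"
    and g: "periodic2pi g" "\<And>x. (g has_real_derivative g' x) (at x)"
      "\<And>x. (g' has_real_derivative g'' x) (at x)" "continuous_on UNIV g''"
    using assms unfolding C2_circle_def by blast
  show ?thesis unfolding C2_circle_def
  proof (intro conjI exI allI)
    show "periodic2pi (\<lambda>x. f x + g x)" using f(1) g(1) by (simp add: periodic2pi_def)
    show "((\<lambda>x. f x + g x) has_real_derivative f' x + g' x) (at x)" for x by (intro DERIV_add f g)
    show "((\<lambda>x. f' x + g' x) has_real_derivative f'' x + g'' x) (at x)" for x by (intro DERIV_add f g)
    show "continuous_on UNIV (\<lambda>x. f'' x + g'' x)" by (intro continuous_intros f g)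
  qed
qed

lemma C2_circle_divide:
  assumes "C2_circle f"
  shows "C2_circle (\<lambda>x. f x / c)"
proof -
  obtain f' f'' where
    f: "periodic2pi f" "\<And>x. (f has_real_derivative f' x) (at x)"
      "\<And>x. (f' has_real_derivative f'' x) (at x)" "continuous_on UNIV f''"
    using assms unfolding C2_circle_def by blast
  show ?thesis unfolding C2_circle_def
  proof (intro conjI exI allI)
    show "periodic2pi (\<lambda>x. f x / c)" using f(1) by (simp add: periodic2pi_def)
    show "((\<lambda>x. f x / c) has_real_derivative f' x / c) (at x)" for x by (intro DERIV_cdivide f)
    show "((\<lambda>x. f' x / c) has_real_derivative f'' x / c) (at x)" for x by (intro DERIV_cdivide f)
    show "continuous_on UNIV (\<lambda>x. f'' x / c)" unfolding divide_inverse by (intro continuous_intros f)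
  qed
qed

lemma circ_int_eq_integral:
  assumes "continuous_on UNIV f"
  shows "circ_int f = integral {0..2*pi} f"
  unfolding circ_int_def
  by (intro set_borel_integral_eq_integral(2) borel_integrable_atLeastAtMost' continuous_on_subset[OF assms])
    simp

lemma L2_circle_continuous:
  assumes "continuous_on UNIV f"
  shows "L2_circle f"
  unfolding L2_circle_def
  using assms by (auto intro!: borel_measurable_continuous_onI borel_integrable_atLeastAtMost'
      continuous_intros intro: continuous_on_subset)

lemma ONB_L2_circle_orthonormal:
  assumes "ONB_L2_circle b" "\<And>k. continuous_on UNIV (b k)"
  shows "integral {0..2*pi} (\<lambda>x. b j x * b k x) = (if j = k then 1 else 0)"
  using assms by (simp add: ONB_L2_circle_def circ_int_eq_integral[symmetric] continuous_intros)

lemma ONB_L2_circle_complete: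
  assumes b: "ONB_L2_circle b" "\<And>k. continuous_on UNIV (b k)" and f: "continuous_on UNIV f"
  shows "(\<lambda>n. integral {0..2*pi} (\<lambda>x. (f x - (\<Sum>k<n. integral {0..2*pi} (\<lambda>y. f y * b k y) * b k x))\<^sup>2))
    \<longlonglongrightarrow> 0"
proof -
  have coeff: "circ_int (\<lambda>y. f y * b k y) = integral {0..2*pi} (\<lambda>y. f y * b k y)" for k
    by (intro circ_int_eq_integral continuous_intros b f)
  have "circ_int (\<lambda>x. (f x - (\<Sum>k<n. circ_int (\<lambda>y. f y * b k y) * b k x))\<^sup>2)
      = integral {0..2*pi} (\<lambda>x. (f x - (\<Sum>k<n. integral {0..2*pi} (\<lambda>y. f y * b k y) * b k x))\<^sup>2)" for n
    unfolding coeff by (intro circ_int_eq_integral continuous_intros b f)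
  moreover have "(\<lambda>n. circ_int (\<lambda>x. (f x - (\<Sum>k<n. circ_int (\<lambda>y. f y * b k y) * b k x))\<^sup>2)) \<longlonglongrightarrow> 0"
    using b(1) L2_circle_continuous[OF f] unfolding ONB_L2_circle_def by blast
  ultimately show ?thesis by simp
qed

lemma circle_eigenbasisI:
  assumes sigma: "\<sigma> > 0" and A: "C0_circle A"
    and b_C2: "\<forall>k. C2_circle (b k)" and b_eigen: "\<forall>k x. Lop \<sigma> A (b k) x = lam k * b k x"
    and b_ONB: "ONB_L2_circle b" and lam: "filterlim lam at_bot sequentially"
  obtains b' where "circle_eigenbasis \<sigma> A b b' lam"
proof -
  obtain b' b'' where b': "\<And>k x. (b k has_real_derivative b' k x) (at x)"
    and b'': "\<And>k x. (b' k has_real_derivative b'' k x) (at x)"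
    using b_C2 unfolding C2_circle_def by metis
  have "b'' k x = (lam k - A x) * b k x / \<sigma>" for k x
  proof -
    have "deriv (b k) = b' k" using b' by (intro ext DERIV_imp_deriv)
    then have "\<sigma> * b'' k x + A x * b k x = lam k * b k x"
      using b_eigen[rule_format, of k x] DERIV_imp_deriv[OF b''] by (simp add: Lop_def)
    then show ?thesis using sigma by (simp add: field_simps)
  qed
  with b'' have b'_deriv: "\<And>k x. (b' k has_real_derivative (lam k - A x) * b k x / \<sigma>) (at x)"
    by simp
  have cb: "continuous_on UNIV (b k)" for k
    using b' by (meson DERIV_isCont continuous_at_imp_continuous_on)
  show thesis
  proof (rule that, unfold_locales)
    show "periodic2pi (b k)" for k using b_C2 by (simp add: C2_circle_def)
  qed (use sigma A b' b'_deriv lam ONB_L2_circle_orthonormal[OF b_ONB cb]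
      ONB_L2_circle_complete[OF b_ONB cb] in \<open>auto simp: C0_circle_def\<close>)
qed

lemma continuous_on_mult_const_powr:
  fixes f :: "real \<Rightarrow> real"
  assumes "continuous_on UNIV f" "\<And>x. 0 < f x" "0 \<le> a"
  shows "continuous_on UNIV (\<lambda>x. (a * f x) powr p)"
proof (cases "a = 0")
  case False
  then have "a * f x \<noteq> 0" for x using assms(2)[of x] by simp
  then show ?thesis by (intro continuous_intros assms(1)) auto
qed simp

theorem proposition5p10:
  fixes \<sigma> \<rho> q \<gamma> :: real
    and A \<eta> :: "real \<Rightarrow> real"
    and b :: "nat \<Rightarrow> real \<Rightarrow> real"
    and lam :: "nat \<Rightarrow> real"
  assumes sigma_pos: "\<sigma> > 0"
    and A_cont: "C0_circle A" and A_pos: "\<forall>x. A x > 0"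
    and eta_cont: "C0_circle \<eta>" and eta_pos: "\<forall>x. \<eta> x > 0"
    and q_nonneg: "q \<ge> 0"
    and gamma: "(0 < \<gamma> \<and> \<gamma> < 1) \<or> 1 < \<gamma>"
    and rho_pos: "\<rho> > 0"
    and b_C2: "\<forall>k. C2_circle (b k)"
    and b_eigen: "\<forall>k x. Lop \<sigma> A (b k) x = lam k * b k x"
    and b_ONB: "ONB_L2_circle b"
    and b0_pos: "\<forall>x. b 0 x > 0"
    and lambda0_max: "\<forall>k\<ge>1. lam k < lam 0"
    and lambda_to_bot: "filterlim lam at_bot sequentially"
    and rho_big: "\<rho> > lam 0 * (1 - \<gamma>)"
  shows "let \<alpha>0 = (\<gamma> / (\<rho> - lam 0 * (1 - \<gamma>)) *
                  circ_int (\<lambda>x. \<eta> x powr ((q + \<gamma> - 1) / \<gamma>) * b 0 x powr ((\<gamma> - 1) / \<gamma>)))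
                 powr (\<gamma> / (1 - \<gamma>));
             \<beta> = (\<lambda>x. \<alpha>0 * b 0 x);
             \<beta>k = (\<lambda>k. circ_int (\<lambda>x. b k x * \<beta> x powr (- 1 / \<gamma>) * \<eta> x powr ((q + \<gamma> - 1) / \<gamma>)));
             g = (lam 0 - \<rho>) / \<gamma>
         in \<exists>S. uniform_limit UNIV
                  (\<lambda>n x. b 0 x / \<alpha>0 + (\<Sum>k\<in>{1..n}. \<beta>k k / (lam k - g) * b k x)) S sequentially
                \<and> C2_circle S"
proof -
  obtain b' where "circle_eigenbasis \<sigma> A b b' lam"
    using circle_eigenbasisI[OF sigma_pos A_cont b_C2 b_eigen b_ONB lambda_to_bot] .
  then interpret circle_eigenbasis \<sigma> A b b' lam .
  define \<alpha>0 where "\<alpha>0 = (\<gamma> / (\<rho> - lam 0 * (1 - \<gamma>)) *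
    circ_int (\<lambda>x. \<eta> x powr ((q + \<gamma> - 1) / \<gamma>) * b 0 x powr ((\<gamma> - 1) / \<gamma>))) powr (\<gamma> / (1 - \<gamma>))"
  define g where "g = (lam 0 - \<rho>) / \<gamma>"
  define h where "h x = (\<alpha>0 * b 0 x) powr (- 1 / \<gamma>) * \<eta> x powr ((q + \<gamma> - 1) / \<gamma>)" for x
  have h: "continuous_on UNIV h" "periodic2pi h"
    using eta_cont eta_pos b0_pos b_periodic[of 0] unfolding h_def C0_circle_def
    by (auto intro!: continuous_intros continuous_on_mult_const_powr simp: \<alpha>0_def periodic2pi_def)
      (metis less_irrefl)
  define c where "c k = (if k = 0 then 0 else fourier_coeff h k / (lam k - g))" for k
  have "\<forall>\<^sub>F k in sequentially. c k = fourier_coeff h k / (lam k - g)"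
    using eventually_gt_at_top[of 0] by eventually_elim (simp add: c_def)
  then obtain T where T: "uniform_limit UNIV (\<lambda>n x. \<Sum>k<n. c k * b k x) T sequentially" "C2_circle T"
    using eigen_series_C2[OF h] by blast
  have "(\<Sum>k\<in>{1..n}. c k * b k x) = (\<Sum>k\<in>{1..n}. fourier_coeff h k / (lam k - g) * b k x)" for n x
    by (rule sum.cong) (auto simp: c_def)
  moreover have "c 0 = 0" by (simp add: c_def)
  ultimately have "uniform_limit UNIV (\<lambda>n x. \<Sum>k\<in>{1..n}. fourier_coeff h k / (lam k - g) * b k x) T sequentially"
    using uniform_limit_sums_from_1[OF T(1)] by simp
  then have "uniform_limit UNIV (\<lambda>n x. b 0 x / \<alpha>0 + (\<Sum>k\<in>{1..n}. fourier_coeff h k / (lam k - g) * b k x))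
      (\<lambda>x. b 0 x / \<alpha>0 + T x) sequentially"
    by (rule uniform_limit_add[OF uniform_limit_const])
  moreover have "C2_circle (\<lambda>x. b 0 x / \<alpha>0 + T x)"
    using b_C2 T(2) by (intro C2_circle_add C2_circle_divide) auto
  moreover have "circ_int (\<lambda>x. b k x * (\<alpha>0 * b 0 x) powr (- 1 / \<gamma>) * \<eta> x powr ((q + \<gamma> - 1) / \<gamma>))
      = fourier_coeff h k" for k
    using circ_int_eq_integral[of "\<lambda>x. h x * b k x"] h(1)
    by (simp add: fourier_coeff_def h_def continuous_intros ac_simps)
  ultimately show ?thesis unfolding Let_def \<alpha>0_def[symmetric] g_def[symmetric] by auto
qed

end
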